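(* Let $R$ be a ring with Jacobson radical $J$, and let $M$ be an RD-regular left $R$-module. Then $JM=0$; and if moreover $R$ is semilocal, then $M$ is semisimple.
   Context: A short exact sequence of left $R$-modules is RD-pure if it remains exact after tensoring with every right module of the form $R/rR$, $r\in R$; a submodule is an RD-submodule if the inclusion gives an RD-pure exact sequence. A left module is RD-regular if all of its submodules are RD-submodules. *)

theory Defs
  imports "HOL-Algebra.Module" "HOL-Algebra.QuotRing"
begin

text \<open>Left modules over a (not necessarily commutative) ring, using the
HOL-Algebra module record (the library locale module requires a commutative ring).\<close>

definition left_module :: "('a, 'c) ring_scheme \<Rightarrow> ('a, 'b, 'd) module_scheme \<Rightarrow> bool" where
  "left_module R M \<longleftrightarrow> ring R \<and> abelian_group M \<and>
     (\<forall>a\<in>carrier R. \<forall>x\<in>carrier M. a \<odot>\<^bsub>M\<^esub> x \<in> carrier M) \<and>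
     (\<forall>a\<in>carrier R. \<forall>b\<in>carrier R. \<forall>x\<in>carrier M.
        (a \<oplus>\<^bsub>R\<^esub> b) \<odot>\<^bsub>M\<^esub> x = (a \<odot>\<^bsub>M\<^esub> x) \<oplus>\<^bsub>M\<^esub> (b \<odot>\<^bsub>M\<^esub> x)) \<and>
     (\<forall>a\<in>carrier R. \<forall>x\<in>carrier M. \<forall>y\<in>carrier M.
        a \<odot>\<^bsub>M\<^esub> (x \<oplus>\<^bsub>M\<^esub> y) = (a \<odot>\<^bsub>M\<^esub> x) \<oplus>\<^bsub>M\<^esub> (a \<odot>\<^bsub>M\<^esub> y)) \<and>
     (\<forall>a\<in>carrier R. \<forall>b\<in>carrier R. \<forall>x\<in>carrier M.
        (a \<otimes>\<^bsub>R\<^esub> b) \<odot>\<^bsub>M\<^esub> x = a \<odot>\<^bsub>M\<^esub> (b \<odot>\<^bsub>M\<^esub> x)) \<and>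
     (\<forall>x\<in>carrier M. \<one>\<^bsub>R\<^esub> \<odot>\<^bsub>M\<^esub> x = x)"

definition lsubmodule :: "('a, 'c) ring_scheme \<Rightarrow> 'b set \<Rightarrow> ('a, 'b, 'd) module_scheme \<Rightarrow> bool" where
  "lsubmodule R N M \<longleftrightarrow> N \<subseteq> carrier M \<and> \<zero>\<^bsub>M\<^esub> \<in> N \<and>
     (\<forall>x\<in>N. \<forall>y\<in>N. x \<oplus>\<^bsub>M\<^esub> y \<in> N) \<and> (\<forall>x\<in>N. \<ominus>\<^bsub>M\<^esub> x \<in> N) \<and>
     (\<forall>a\<in>carrier R. \<forall>x\<in>N. a \<odot>\<^bsub>M\<^esub> x \<in> N)"

text \<open>RD-submodule: the sequence 0 \<rightarrow> N \<rightarrow> M \<rightarrow> M/N \<rightarrow> 0 stays exact after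
applying R/rR \<otimes>_R -. Via the natural isomorphism R/rR \<otimes>_R X \<cong> X/rX, this is
injectivity of the induced map N/rN \<rightarrow> M/rM (right exactness being automatic),
i.e. N \<inter> rM \<subseteq> rN for all r.\<close>

definition rd_submodule :: "('a, 'c) ring_scheme \<Rightarrow> 'b set \<Rightarrow> ('a, 'b, 'd) module_scheme \<Rightarrow> bool" where
  "rd_submodule R N M \<longleftrightarrow> lsubmodule R N M \<and>
     (\<forall>r\<in>carrier R. \<forall>x\<in>N. (\<exists>y\<in>carrier M. x = r \<odot>\<^bsub>M\<^esub> y) \<longrightarrow> (\<exists>z\<in>N. x = r \<odot>\<^bsub>M\<^esub> z))"

definition rd_regular :: "('a, 'c) ring_scheme \<Rightarrow> ('a, 'b, 'd) module_scheme \<Rightarrow> bool" where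
  "rd_regular R M \<longleftrightarrow> (\<forall>N. lsubmodule R N M \<longrightarrow> rd_submodule R N M)"

definition semisimple_module :: "('a, 'c) ring_scheme \<Rightarrow> ('a, 'b, 'd) module_scheme \<Rightarrow> bool" where
  "semisimple_module R M \<longleftrightarrow> (\<forall>N. lsubmodule R N M \<longrightarrow>
     (\<exists>N'. lsubmodule R N' M \<and> N \<inter> N' = {\<zero>\<^bsub>M\<^esub>} \<and>
        {x \<oplus>\<^bsub>M\<^esub> y | x y. x \<in> N \<and> y \<in> N'} = carrier M))"

definition left_ideal :: "('a, 'c) ring_scheme \<Rightarrow> 'a set \<Rightarrow> bool" where
  "left_ideal R L \<longleftrightarrow> L \<subseteq> carrier R \<and> \<zero>\<^bsub>R\<^esub> \<in> L \<and>
     (\<forall>x\<in>L. \<forall>y\<in>L. x \<oplus>\<^bsub>R\<^esub> y \<in> L) \<and> (\<forall>x\<in>L. \<ominus>\<^bsub>R\<^esub> x \<in> L) \<and>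
     (\<forall>a\<in>carrier R. \<forall>x\<in>L. a \<otimes>\<^bsub>R\<^esub> x \<in> L)"

definition maximal_left_ideal :: "('a, 'c) ring_scheme \<Rightarrow> 'a set \<Rightarrow> bool" where
  "maximal_left_ideal R L \<longleftrightarrow> left_ideal R L \<and> L \<noteq> carrier R \<and>
     (\<forall>L'. left_ideal R L' \<and> L \<subseteq> L' \<longrightarrow> L' = L \<or> L' = carrier R)"

definition jacobson_radical :: "('a, 'c) ring_scheme \<Rightarrow> 'a set" where
  "jacobson_radical R = carrier R \<inter> \<Inter>{L. maximal_left_ideal R L}"

definition semisimple_ring :: "('a, 'c) ring_scheme \<Rightarrow> bool" where
  "semisimple_ring R \<longleftrightarrow> (\<forall>L. left_ideal R L \<longrightarrow>
     (\<exists>L'. left_ideal R L' \<and> L \<inter> L' = {\<zero>\<^bsub>R\<^esub>} \<and>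
        {x \<oplus>\<^bsub>R\<^esub> y | x y. x \<in> L \<and> y \<in> L'} = carrier R))"

definition semilocal :: "('a, 'c) ring_scheme \<Rightarrow> bool" where
  "semilocal R \<longleftrightarrow> semisimple_ring (R Quot jacobson_radical R)"

end

theory Submission
  imports Defs
begin

text \<open>If \<open>j \<in> J\<close> and \<open>x \<in> M\<close>, RD-purity of the cyclic submodule \<open>R(jx)\<close> writes \<open>jx = j(ajx)\<close>
for some \<open>a\<close>, so \<open>w = ajx\<close> is fixed by \<open>aj \<in> J\<close>; as \<open>1 - aj\<close> has a left inverse, \<open>w = 0\<close>
and therefore \<open>jx = 0\<close>. For the second part let \<open>N'\<close> be maximal among the submodules
meeting a given submodule \<open>N\<close> trivially (Zorn). For \<open>x \<in> M\<close>, the image of the left ideal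
\<open>L = (N + N' : x)\<close> in the semisimple ring \<open>R/J\<close> has a complement, which yields
\<open>1 \<equiv> l + e (mod J)\<close> with \<open>l \<in> L\<close> and \<open>Re \<inter> L \<subseteq> J\<close>. Since \<open>JM = 0\<close>, \<open>x = lx + ex\<close>, and no
nonzero multiple of \<open>ex\<close> lies in \<open>N + N'\<close>; by maximality \<open>ex \<in> N'\<close>, so \<open>x \<in> N + N'\<close>.\<close>

locale lmodule =
  fixes R :: "('a, 'c) ring_scheme" (structure) and M :: "('a, 'b, 'd) module_scheme"
  assumes left_module: "left_module R M"
begin

sublocale R: ring R
  using left_module unfolding left_module_def by blast

sublocale M: abelian_group M
  using left_module unfolding left_module_def by blast

lemma smult_closed [simp]: "a \<in> carrier R \<Longrightarrow> x \<in> carrier M \<Longrightarrow> a \<odot>\<^bsub>M\<^esub> x \<in> carrier M"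
  and smult_l_distr: "a \<in> carrier R \<Longrightarrow> b \<in> carrier R \<Longrightarrow> x \<in> carrier M \<Longrightarrow>
    (a \<oplus> b) \<odot>\<^bsub>M\<^esub> x = a \<odot>\<^bsub>M\<^esub> x \<oplus>\<^bsub>M\<^esub> b \<odot>\<^bsub>M\<^esub> x"
  and smult_r_distr: "a \<in> carrier R \<Longrightarrow> x \<in> carrier M \<Longrightarrow> y \<in> carrier M \<Longrightarrow>
    a \<odot>\<^bsub>M\<^esub> (x \<oplus>\<^bsub>M\<^esub> y) = a \<odot>\<^bsub>M\<^esub> x \<oplus>\<^bsub>M\<^esub> a \<odot>\<^bsub>M\<^esub> y"
  and smult_assoc1: "a \<in> carrier R \<Longrightarrow> b \<in> carrier R \<Longrightarrow> x \<in> carrier M \<Longrightarrow>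
    (a \<otimes> b) \<odot>\<^bsub>M\<^esub> x = a \<odot>\<^bsub>M\<^esub> (b \<odot>\<^bsub>M\<^esub> x)"
  and smult_one [simp]: "x \<in> carrier M \<Longrightarrow> \<one> \<odot>\<^bsub>M\<^esub> x = x"
  using left_module unfolding left_module_def by blast+

lemma smult_l_null [simp]: "x \<in> carrier M \<Longrightarrow> \<zero> \<odot>\<^bsub>M\<^esub> x = \<zero>\<^bsub>M\<^esub>"
  using M.add.l_cancel_one[of "\<zero> \<odot>\<^bsub>M\<^esub> x" "\<zero> \<odot>\<^bsub>M\<^esub> x"] by (simp flip: smult_l_distr)

lemma smult_r_null [simp]: "a \<in> carrier R \<Longrightarrow> a \<odot>\<^bsub>M\<^esub> \<zero>\<^bsub>M\<^esub> = \<zero>\<^bsub>M\<^esub>"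
  using M.add.l_cancel_one[of "a \<odot>\<^bsub>M\<^esub> \<zero>\<^bsub>M\<^esub>" "a \<odot>\<^bsub>M\<^esub> \<zero>\<^bsub>M\<^esub>"] by (simp flip: smult_r_distr)

lemma smult_l_minus: "a \<in> carrier R \<Longrightarrow> x \<in> carrier M \<Longrightarrow> (\<ominus> a) \<odot>\<^bsub>M\<^esub> x = \<ominus>\<^bsub>M\<^esub> (a \<odot>\<^bsub>M\<^esub> x)"
  by (rule M.minus_equality[symmetric]) (simp_all flip: smult_l_distr add: R.l_neg)

lemma eq_zero_if_smult_fixed:
  assumes s: "s \<in> carrier R" and u: "u \<in> carrier R" "u \<otimes> (\<one> \<ominus> s) = \<one>"
    and w: "w \<in> carrier M" "s \<odot>\<^bsub>M\<^esub> w = w"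
  shows "w = \<zero>\<^bsub>M\<^esub>"
proof -
  have "(\<one> \<ominus> s) \<odot>\<^bsub>M\<^esub> w = w \<ominus>\<^bsub>M\<^esub> s \<odot>\<^bsub>M\<^esub> w"
    using s w by (simp add: R.minus_eq M.minus_eq smult_l_distr smult_l_minus)
  also have "\<dots> = \<zero>\<^bsub>M\<^esub>"
    using w by (simp add: M.minus_eq M.r_neg)
  finally have annihilated: "(\<one> \<ominus> s) \<odot>\<^bsub>M\<^esub> w = \<zero>\<^bsub>M\<^esub>" .
  have "w = (u \<otimes> (\<one> \<ominus> s)) \<odot>\<^bsub>M\<^esub> w"
    using u w by simp
  also have "\<dots> = u \<odot>\<^bsub>M\<^esub> ((\<one> \<ominus> s) \<odot>\<^bsub>M\<^esub> w)"
    using s u w by (intro smult_assoc1) auto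
  finally show ?thesis
    using annihilated u by simp
qed

lemma lsubmodule_zero: "lsubmodule R {\<zero>\<^bsub>M\<^esub>} M"
  unfolding lsubmodule_def by simp

lemma lsubmodule_cyclic:
  assumes "v \<in> carrier M"
  shows "lsubmodule R {a \<odot>\<^bsub>M\<^esub> v | a. a \<in> carrier R} M"
  unfolding lsubmodule_def
proof (intro conjI ballI)
  show "{a \<odot>\<^bsub>M\<^esub> v | a. a \<in> carrier R} \<subseteq> carrier M"
    using assms by auto
  show "\<zero>\<^bsub>M\<^esub> \<in> {a \<odot>\<^bsub>M\<^esub> v | a. a \<in> carrier R}"
    using assms by (auto intro!: exI[of _ \<zero>])
  fix y assume "y \<in> {a \<odot>\<^bsub>M\<^esub> v | a. a \<in> carrier R}"
  then obtain a where a: "a \<in> carrier R" "y = a \<odot>\<^bsub>M\<^esub> v" by blast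
  show "\<ominus>\<^bsub>M\<^esub> y \<in> {a \<odot>\<^bsub>M\<^esub> v | a. a \<in> carrier R}"
    using a assms by (auto simp: smult_l_minus intro!: exI[of _ "\<ominus> a"])
  show "b \<odot>\<^bsub>M\<^esub> y \<in> {a \<odot>\<^bsub>M\<^esub> v | a. a \<in> carrier R}" if "b \<in> carrier R" for b
    using a assms that by (auto simp: smult_assoc1 intro!: exI[of _ "b \<otimes> a"])
  show "y \<oplus>\<^bsub>M\<^esub> z \<in> {a \<odot>\<^bsub>M\<^esub> v | a. a \<in> carrier R}"
    if z: "z \<in> {a \<odot>\<^bsub>M\<^esub> v | a. a \<in> carrier R}" for z
  proof -
    obtain b where "b \<in> carrier R" "z = b \<odot>\<^bsub>M\<^esub> v"
      using z by blast
    then show ?thesis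
      using a assms by (auto simp: smult_l_distr intro!: exI[of _ "a \<oplus> b"])
  qed
qed

lemma lsubmodule_sum:
  assumes A: "lsubmodule R A M" and B: "lsubmodule R B M"
  shows "lsubmodule R {a \<oplus>\<^bsub>M\<^esub> b | a b. a \<in> A \<and> b \<in> B} M"
  unfolding lsubmodule_def
proof (intro conjI ballI)
  have AB: "A \<subseteq> carrier M" "B \<subseteq> carrier M"
    using A B unfolding lsubmodule_def by auto
  show "{a \<oplus>\<^bsub>M\<^esub> b | a b. a \<in> A \<and> b \<in> B} \<subseteq> carrier M"
    using AB by auto
  have "\<zero>\<^bsub>M\<^esub> = \<zero>\<^bsub>M\<^esub> \<oplus>\<^bsub>M\<^esub> \<zero>\<^bsub>M\<^esub>" "\<zero>\<^bsub>M\<^esub> \<in> A" "\<zero>\<^bsub>M\<^esub> \<in> B"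
    using A B unfolding lsubmodule_def by auto
  then show "\<zero>\<^bsub>M\<^esub> \<in> {a \<oplus>\<^bsub>M\<^esub> b | a b. a \<in> A \<and> b \<in> B}"
    by blast
  fix x assume "x \<in> {a \<oplus>\<^bsub>M\<^esub> b | a b. a \<in> A \<and> b \<in> B}"
  then obtain a b where ab: "a \<in> A" "b \<in> B" "x = a \<oplus>\<^bsub>M\<^esub> b" by blast
  have abc: "a \<in> carrier M" "b \<in> carrier M"
    using ab AB by auto
  have "\<ominus>\<^bsub>M\<^esub> x = \<ominus>\<^bsub>M\<^esub> a \<oplus>\<^bsub>M\<^esub> \<ominus>\<^bsub>M\<^esub> b"
    using ab abc by (simp add: M.minus_add)
  then show "\<ominus>\<^bsub>M\<^esub> x \<in> {a \<oplus>\<^bsub>M\<^esub> b | a b. a \<in> A \<and> b \<in> B}"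
    using A B ab unfolding lsubmodule_def by blast
  show "r \<odot>\<^bsub>M\<^esub> x \<in> {a \<oplus>\<^bsub>M\<^esub> b | a b. a \<in> A \<and> b \<in> B}" if r: "r \<in> carrier R" for r
  proof -
    have "r \<odot>\<^bsub>M\<^esub> x = r \<odot>\<^bsub>M\<^esub> a \<oplus>\<^bsub>M\<^esub> r \<odot>\<^bsub>M\<^esub> b"
      using ab abc r by (simp add: smult_r_distr)
    then show ?thesis
      using A B ab r unfolding lsubmodule_def by blast
  qed
  show "x \<oplus>\<^bsub>M\<^esub> y \<in> {a \<oplus>\<^bsub>M\<^esub> b | a b. a \<in> A \<and> b \<in> B}"
    if y: "y \<in> {a \<oplus>\<^bsub>M\<^esub> b | a b. a \<in> A \<and> b \<in> B}" for y
  proof -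
    obtain a' b' where ab': "a' \<in> A" "b' \<in> B" "y = a' \<oplus>\<^bsub>M\<^esub> b'"
      using y by blast
    have "x \<oplus>\<^bsub>M\<^esub> y = (a \<oplus>\<^bsub>M\<^esub> a') \<oplus>\<^bsub>M\<^esub> (b \<oplus>\<^bsub>M\<^esub> b')"
      using ab ab' abc AB by (simp add: M.a_ac subsetD)
    then show ?thesis
      using A B ab ab' unfolding lsubmodule_def by blast
  qed
qed

lemma lsubmodule_chain_Union:
  assumes "C \<noteq> {}" and "\<And>N. N \<in> C \<Longrightarrow> lsubmodule R N M"
    and chain: "\<And>X Y. X \<in> C \<Longrightarrow> Y \<in> C \<Longrightarrow> X \<subseteq> Y \<or> Y \<subseteq> X"
  shows "lsubmodule R (\<Union>C) M"
  unfolding lsubmodule_def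
proof (intro conjI ballI)
  show "\<Union>C \<subseteq> carrier M" "\<zero>\<^bsub>M\<^esub> \<in> \<Union>C"
    using assms unfolding lsubmodule_def by blast+
  fix x assume "x \<in> \<Union>C"
  then obtain X where X: "X \<in> C" "x \<in> X" by blast
  show "\<ominus>\<^bsub>M\<^esub> x \<in> \<Union>C" "\<And>a. a \<in> carrier R \<Longrightarrow> a \<odot>\<^bsub>M\<^esub> x \<in> \<Union>C"
    using X assms(2)[OF X(1)] unfolding lsubmodule_def by blast+
  show "x \<oplus>\<^bsub>M\<^esub> y \<in> \<Union>C" if y: "y \<in> \<Union>C" for y
  proof -
    obtain Y where Y: "Y \<in> C" "y \<in> Y"
      using y by blast
    then have "x \<in> X \<union> Y" "y \<in> X \<union> Y" "X \<union> Y \<in> C"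
      using X chain[OF X(1) Y(1)] by (auto simp: sup_absorb1 sup_absorb2)
    then show ?thesis
      using assms(2) unfolding lsubmodule_def by blast
  qed
qed

lemma exists_maximal_lsubmodule_avoiding:
  assumes "lsubmodule R I M" and "I \<inter> S = {}"
  obtains N where "lsubmodule R N M" "I \<subseteq> N" "N \<inter> S = {}"
    "\<And>N'. lsubmodule R N' M \<Longrightarrow> N \<subseteq> N' \<Longrightarrow> N' \<inter> S = {} \<Longrightarrow> N' = N"
proof -
  let ?F = "{N. lsubmodule R N M \<and> I \<subseteq> N \<and> N \<inter> S = {}}"
  have "\<exists>N\<in>?F. \<forall>N'\<in>?F. N \<subseteq> N' \<longrightarrow> N' = N"
  proof (rule subset_Zorn_nonempty)
    show "?F \<noteq> {}"
      using assms by blast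
    fix C assume C: "C \<noteq> {}" "subset.chain ?F C"
    then have "C \<subseteq> ?F" and "\<And>X Y. X \<in> C \<Longrightarrow> Y \<in> C \<Longrightarrow> X \<subseteq> Y \<or> Y \<subseteq> X"
      unfolding subset.chain_def by blast+
    moreover have "lsubmodule R (\<Union>C) M"
      using C(1) calculation by (intro lsubmodule_chain_Union) auto
    ultimately show "\<Union>C \<in> ?F"
      using C(1) by blast
  qed
  then obtain N where "N \<in> ?F" and "\<forall>N'\<in>?F. N \<subseteq> N' \<longrightarrow> N' = N"
    by blast
  then show ?thesis
    by (intro that[of N]) auto
qed

lemma left_ideal_colon:
  assumes P: "lsubmodule R P M" and x: "x \<in> carrier M"
  shows "left_ideal R {r \<in> carrier R. r \<odot>\<^bsub>M\<^esub> x \<in> P}"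
  using assms unfolding left_ideal_def lsubmodule_def
  by (simp add: smult_l_minus smult_assoc1 smult_l_distr)

end

definition regular_module :: "('a, 'c) ring_scheme \<Rightarrow> ('a, 'a) module" where
  "regular_module R = \<lparr>carrier = carrier R, mult = mult R, one = one R,
     zero = zero R, add = add R, smult = mult R\<rparr>"

lemma regular_module_simps [simp]:
  "carrier (regular_module R) = carrier R"
  "zero (regular_module R) = zero R"
  "add (regular_module R) = add R"
  "smult (regular_module R) = mult R"
  "a_inv (regular_module R) = a_inv R"
  by (simp_all add: regular_module_def a_inv_def m_inv_def[abs_def])

lemma carrier_FactRing: "carrier (R Quot I) = (+>\<^bsub>R\<^esub>) I ` carrier R"
  unfolding FactRing_def A_RCOSETS_def' by auto

lemma zero_FactRing: "\<zero>\<^bsub>R Quot I\<^esub> = I"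
  unfolding FactRing_def by simp

context ring
begin

lemma lmodule_regular_module: "lmodule R (regular_module R)"
  unfolding lmodule_def left_module_def
  by (auto intro!: abelian_groupI ring_axioms a_comm l_distr r_distr m_assoc
      simp: a_assoc)

lemma left_ideal_iff_lsubmodule: "left_ideal R L \<longleftrightarrow> lsubmodule R L (regular_module R)"
  unfolding left_ideal_def lsubmodule_def by simp

lemma left_ideal_principal:
  "e \<in> carrier R \<Longrightarrow> left_ideal R {a \<otimes> e | a. a \<in> carrier R}"
  using lmodule.lsubmodule_cyclic[OF lmodule_regular_module]
  by (simp add: left_ideal_iff_lsubmodule)

lemma left_ideal_sum:
  "left_ideal R A \<Longrightarrow> left_ideal R B \<Longrightarrow> left_ideal R {a \<oplus> b | a b. a \<in> A \<and> b \<in> B}"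
  using lmodule.lsubmodule_sum[OF lmodule_regular_module]
  by (simp add: left_ideal_iff_lsubmodule)

lemma left_ideal_eq_carrier_if_one: "left_ideal R L \<Longrightarrow> \<one> \<in> L \<Longrightarrow> L = carrier R"
  unfolding left_ideal_def by (metis r_one subsetI subset_antisym)

lemma one_notin_maximal_left_ideal: "maximal_left_ideal R L \<Longrightarrow> \<one> \<notin> L"
  unfolding maximal_left_ideal_def using left_ideal_eq_carrier_if_one by blast

lemma exists_maximal_left_ideal:
  assumes I: "left_ideal R I" and one: "\<one> \<notin> I"
  obtains L where "maximal_left_ideal R L" "I \<subseteq> L"
proof -
  obtain L where L: "left_ideal R L" "I \<subseteq> L" "\<one> \<notin> L"
    and max: "\<And>L'. left_ideal R L' \<Longrightarrow> L \<subseteq> L' \<Longrightarrow> \<one> \<notin> L' \<Longrightarrow> L' = L"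
    using lmodule.exists_maximal_lsubmodule_avoiding[OF lmodule_regular_module, of I "{\<one>}"] I one
    by (auto simp: left_ideal_iff_lsubmodule)
  have "maximal_left_ideal R L"
    unfolding maximal_left_ideal_def
    using L max left_ideal_eq_carrier_if_one by auto
  then show ?thesis
    using L(2) by (rule that)
qed

lemma jacobson_radical_subset: "jacobson_radical R \<subseteq> carrier R"
  unfolding jacobson_radical_def by blast

lemma jacobson_radical_left_inverse:
  assumes y: "y \<in> jacobson_radical R" and r: "r \<in> carrier R"
  shows "\<exists>u\<in>carrier R. u \<otimes> (\<one> \<ominus> r \<otimes> y) = \<one>"
proof (rule ccontr)
  assume no_inverse: "\<not> ?thesis"
  have yc: "y \<in> carrier R"
    using y jacobson_radical_subset by blast
  let ?e = "\<one> \<ominus> r \<otimes> y"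
  have ec: "?e \<in> carrier R"
    using yc r by simp
  obtain L where L: "maximal_left_ideal R L" "{a \<otimes> ?e | a. a \<in> carrier R} \<subseteq> L"
  proof (rule exists_maximal_left_ideal[OF left_ideal_principal[OF ec]])
    show "\<one> \<notin> {a \<otimes> ?e | a. a \<in> carrier R}"
      using no_inverse by auto
  qed
  have LI: "left_ideal R L"
    using L unfolding maximal_left_ideal_def by blast
  have "?e \<in> L"
    using L(2) ec by (force intro: exI[of _ \<one>])
  moreover have "r \<otimes> y \<in> L"
    using y L(1) LI r unfolding jacobson_radical_def left_ideal_def by blast
  ultimately have "?e \<oplus> r \<otimes> y \<in> L"
    using LI unfolding left_ideal_def by blast
  moreover have "?e \<oplus> r \<otimes> y = \<one>"
    using r yc by (simp add: a_minus_def a_assoc l_neg)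
  ultimately show False
    using one_notin_maximal_left_ideal L(1) by auto
qed

lemma maximal_left_ideal_sum_principal:
  assumes L: "maximal_left_ideal R L" and y: "y \<in> carrier R" "y \<notin> L"
  obtains l r where "l \<in> L" "r \<in> carrier R" "\<one> = l \<oplus> r \<otimes> y"
proof -
  have LI: "left_ideal R L"
    using L unfolding maximal_left_ideal_def by blast
  let ?L' = "{l \<oplus> b | l b. l \<in> L \<and> b \<in> {a \<otimes> y | a. a \<in> carrier R}}"
  have "L \<subseteq> ?L'"
  proof
    fix l assume l: "l \<in> L"
    then have "l = l \<oplus> \<zero> \<otimes> y"
      using LI y unfolding left_ideal_def by auto
    then show "l \<in> ?L'"
      using l by blast
  qed
  moreover have "y \<in> ?L'"
  proof -
    have "y = \<zero> \<oplus> \<one> \<otimes> y" "\<zero> \<in> L"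
      using LI y unfolding left_ideal_def by auto
    then show ?thesis
      by blast
  qed
  ultimately have "?L' = carrier R"
    using L left_ideal_sum[OF LI left_ideal_principal[OF y(1)]] y(2)
    unfolding maximal_left_ideal_def by blast
  then show ?thesis
    using that one_closed by blast
qed

lemma jacobson_radicalI:
  assumes yc: "y \<in> carrier R"
    and inverse: "\<And>r. r \<in> carrier R \<Longrightarrow> \<exists>u\<in>carrier R. u \<otimes> (\<one> \<ominus> r \<otimes> y) = \<one>"
  shows "y \<in> jacobson_radical R"
  unfolding jacobson_radical_def
proof (intro IntI yc InterI, simp)
  fix L assume L: "maximal_left_ideal R L"
  have LI: "left_ideal R L"
    using L unfolding maximal_left_ideal_def by blast
  show "y \<in> L"
  proof (rule ccontr)
    assume "y \<notin> L"
    then obtain l r where lr: "l \<in> L" "r \<in> carrier R" "\<one> = l \<oplus> r \<otimes> y"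
      using maximal_left_ideal_sum_principal[OF L yc] by blast
    have "l \<in> carrier R"
      using lr LI unfolding left_ideal_def by blast
    then have "l = \<one> \<ominus> r \<otimes> y"
      using lr yc by (simp add: a_minus_def a_assoc r_neg)
    moreover obtain u where "u \<in> carrier R" "u \<otimes> (\<one> \<ominus> r \<otimes> y) = \<one>"
      using inverse lr(2) by blast
    ultimately have "\<one> \<in> L"
      using lr(1) LI unfolding left_ideal_def by metis
    then show False
      using one_notin_maximal_left_ideal L by blast
  qed
qed

lemma left_inverse_one_minus_swap:
  assumes u: "u \<in> carrier R" and b: "b \<in> carrier R" and c: "c \<in> carrier R"
    and inverse: "u \<otimes> (\<one> \<ominus> b \<otimes> c) = \<one>"
  shows "(\<one> \<oplus> c \<otimes> u \<otimes> b) \<otimes> (\<one> \<ominus> c \<otimes> b) = \<one>"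
proof -
  have "c \<otimes> u \<otimes> b \<otimes> (\<one> \<ominus> c \<otimes> b) = c \<otimes> (u \<otimes> (\<one> \<ominus> b \<otimes> c)) \<otimes> b"
    using u b c by (simp add: a_minus_def r_distr l_distr r_minus l_minus m_assoc)
  then have "(\<one> \<oplus> c \<otimes> u \<otimes> b) \<otimes> (\<one> \<ominus> c \<otimes> b) = (\<one> \<ominus> c \<otimes> b) \<oplus> c \<otimes> b"
    using u b c inverse by (simp add: l_distr)
  also have "\<dots> = \<one>"
    using b c by (simp add: a_minus_def a_assoc l_neg)
  finally show ?thesis .
qed

lemma left_ideal_jacobson_radical: "left_ideal R (jacobson_radical R)"
  unfolding jacobson_radical_def left_ideal_def maximal_left_ideal_def by auto

lemma ideal_jacobson_radical: "ideal (jacobson_radical R) R"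
proof (rule idealI[OF ring_axioms])
  let ?J = "jacobson_radical R"
  show "subgroup ?J (add_monoid R)"
    using left_ideal_jacobson_radical unfolding left_ideal_def
    by (intro add.subgroupI) (auto simp: a_inv_def)
  show "x \<otimes> a \<in> ?J" if "a \<in> ?J" "x \<in> carrier R" for a x
    using left_ideal_jacobson_radical that unfolding left_ideal_def by blast
  show "a \<otimes> x \<in> ?J" if a: "a \<in> ?J" and x: "x \<in> carrier R" for a x
  proof (rule jacobson_radicalI)
    have ac: "a \<in> carrier R"
      using a jacobson_radical_subset by blast
    then show "a \<otimes> x \<in> carrier R"
      using x by simp
    fix r assume r: "r \<in> carrier R"
    obtain u where u: "u \<in> carrier R" "u \<otimes> (\<one> \<ominus> (x \<otimes> r) \<otimes> a) = \<one>"
      using jacobson_radical_left_inverse[OF a, of "x \<otimes> r"] r x by blast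
    have "(\<one> \<oplus> (r \<otimes> a) \<otimes> u \<otimes> x) \<otimes> (\<one> \<ominus> (r \<otimes> a) \<otimes> x) = \<one>"
      by (rule left_inverse_one_minus_swap) (use u r x ac in \<open>simp_all add: m_assoc\<close>)
    then show "\<exists>u\<in>carrier R. u \<otimes> (\<one> \<ominus> r \<otimes> (a \<otimes> x)) = \<one>"
      using u r x ac by (auto simp: m_assoc intro!: bexI[of _ "\<one> \<oplus> (r \<otimes> a) \<otimes> u \<otimes> x"])
  qed
qed

lemma left_ideal_rcos_image:
  assumes I: "ideal I R" and L: "left_ideal R L"
  shows "left_ideal (R Quot I) ((+>) I ` L)"
proof -
  interpret H: ring_hom_ring R "R Quot I" "(+>) I"
    using ideal.rcos_ring_hom_ring[OF I] .
  have Lc: "L \<subseteq> carrier R"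
    using L unfolding left_ideal_def by blast
  show ?thesis
    using L Lc carrier_FactRing[of R I] unfolding left_ideal_def
    by (auto simp: subset_eq simp flip: H.hom_add H.hom_a_inv H.hom_mult H.hom_zero
        intro!: imageI)
qed

text \<open>In \<open>R/J\<close> the image of \<open>L\<close> has a complement \<open>L'\<close>; \<open>l\<close> and \<open>e\<close> lift the two
  components of \<open>1\<close> in \<open>R/J = (L + J)/J \<oplus> L'\<close>.\<close>
lemma semilocal_left_ideal_complement:
  assumes sl: "semilocal R" and L: "left_ideal R L"
  obtains l e where "l \<in> L" "e \<in> carrier R" "\<one> \<ominus> (l \<oplus> e) \<in> jacobson_radical R"
    "\<And>r. r \<in> carrier R \<Longrightarrow> r \<otimes> e \<in> L \<Longrightarrow> r \<otimes> e \<in> jacobson_radical R"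
proof -
  let ?J = "jacobson_radical R"
  let ?Q = "R Quot ?J"
  have J: "ideal ?J R"
    by (rule ideal_jacobson_radical)
  interpret H: ring_hom_ring R ?Q "(+>) ?J"
    using ideal.rcos_ring_hom_ring[OF J] .
  have in_J: "a \<in> ?J" if "a \<in> carrier R" "?J +> a = \<zero>\<^bsub>?Q\<^esub>" for a
    using ideal.rcos_const_imp_mem[OF J] that by (simp add: zero_FactRing)
  have "semisimple_ring ?Q"
    using sl unfolding semilocal_def .
  then obtain L' where L': "left_ideal ?Q L'" "(+>) ?J ` L \<inter> L' = {\<zero>\<^bsub>?Q\<^esub>}"
    and sum: "{x \<oplus>\<^bsub>?Q\<^esub> y | x y. x \<in> (+>) ?J ` L \<and> y \<in> L'} = carrier ?Q"
    unfolding semisimple_ring_def using left_ideal_rcos_image[OF J L] by (elim allE impE exE conjE)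
  have "?J +> \<one> \<in> carrier ?Q"
    by (rule H.hom_closed) (rule one_closed)
  then obtain l y where l: "l \<in> L" and y: "y \<in> L'" and one: "?J +> \<one> = (?J +> l) \<oplus>\<^bsub>?Q\<^esub> y"
    unfolding sum[symmetric] by blast
  have "y \<in> carrier ?Q"
    using y L'(1) unfolding left_ideal_def by blast
  then obtain e where e: "e \<in> carrier R" "y = ?J +> e"
    unfolding carrier_FactRing by blast
  have lc: "l \<in> carrier R"
    using l L unfolding left_ideal_def by blast
  show ?thesis
  proof (rule that[OF l e(1)])
    have "?J +> (\<one> \<ominus> (l \<oplus> e)) = \<zero>\<^bsub>?Q\<^esub>"
      using lc e one by (simp add: a_minus_def H.S.r_neg)
    then show "\<one> \<ominus> (l \<oplus> e) \<in> ?J"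
      using lc e by (intro in_J) auto
    show "r \<otimes> e \<in> ?J" if r: "r \<in> carrier R" and re: "r \<otimes> e \<in> L" for r
    proof (rule in_J)
      have "?J +> (r \<otimes> e) = (?J +> r) \<otimes>\<^bsub>?Q\<^esub> y"
        using r e by simp
      also have "\<dots> \<in> L'"
        using L'(1) y r unfolding left_ideal_def by simp
      finally show "?J +> (r \<otimes> e) = \<zero>\<^bsub>?Q\<^esub>"
        using L'(2) re by blast
    qed (use r e in simp)
  qed
qed

end

context lmodule
begin

lemma jacobson_radical_annihilates:
  assumes rd: "rd_regular R M" and j: "j \<in> jacobson_radical R" and x: "x \<in> carrier M"
  shows "j \<odot>\<^bsub>M\<^esub> x = \<zero>\<^bsub>M\<^esub>"
proof -
  let ?v = "j \<odot>\<^bsub>M\<^esub> x"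
  let ?N = "{a \<odot>\<^bsub>M\<^esub> ?v | a. a \<in> carrier R}"
  have jc: "j \<in> carrier R"
    using j R.jacobson_radical_subset by blast
  then have vc: "?v \<in> carrier M"
    using x by simp
  have "rd_submodule R ?N M"
    using rd lsubmodule_cyclic[OF vc] unfolding rd_regular_def by blast
  moreover have "?v \<in> ?N"
  proof -
    have "?v = \<one> \<odot>\<^bsub>M\<^esub> ?v"
      using vc by simp
    then show ?thesis
      using R.one_closed by blast
  qed
  ultimately obtain a where a: "a \<in> carrier R" "?v = j \<odot>\<^bsub>M\<^esub> (a \<odot>\<^bsub>M\<^esub> ?v)"
    using jc x unfolding rd_submodule_def by blast
  define w where "w = a \<odot>\<^bsub>M\<^esub> ?v"
  have wc: "w \<in> carrier M"
    using a vc unfolding w_def by simp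
  have "(a \<otimes> j) \<odot>\<^bsub>M\<^esub> w = w"
    using a jc wc by (simp add: smult_assoc1 w_def flip: a(2))
  moreover obtain u where "u \<in> carrier R" "u \<otimes> (\<one> \<ominus> a \<otimes> j) = \<one>"
    using R.jacobson_radical_left_inverse[OF j a(1)] by blast
  ultimately have "w = \<zero>\<^bsub>M\<^esub>"
    using a(1) jc wc by (intro eq_zero_if_smult_fixed) auto
  then show ?thesis
    using a(2) jc unfolding w_def by simp
qed

lemma mem_maximal_disjoint_lsubmodule:
  assumes N: "lsubmodule R N M" and N': "lsubmodule R N' M" and disjoint: "N \<inter> N' = {\<zero>\<^bsub>M\<^esub>}"
    and maximal: "\<And>N''. lsubmodule R N'' M \<Longrightarrow> N' \<subseteq> N'' \<Longrightarrow> N \<inter> N'' = {\<zero>\<^bsub>M\<^esub>} \<Longrightarrow> N'' = N'"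
    and y: "y \<in> carrier M"
    and trivial: "\<And>r. r \<in> carrier R \<Longrightarrow> r \<odot>\<^bsub>M\<^esub> y \<in> {a \<oplus>\<^bsub>M\<^esub> b | a b. a \<in> N \<and> b \<in> N'} \<Longrightarrow>
      r \<odot>\<^bsub>M\<^esub> y = \<zero>\<^bsub>M\<^esub>"
  shows "y \<in> N'"
proof -
  let ?N'' = "{a \<oplus>\<^bsub>M\<^esub> b | a b. a \<in> N' \<and> b \<in> {r \<odot>\<^bsub>M\<^esub> y | r. r \<in> carrier R}}"
  have N'c: "N' \<subseteq> carrier M"
    using N' unfolding lsubmodule_def by auto
  have N'': "lsubmodule R ?N'' M"
    using lsubmodule_sum[OF N' lsubmodule_cyclic[OF y]] .
  have "N' \<subseteq> ?N''"
  proof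
    fix a assume a: "a \<in> N'"
    then have "a = a \<oplus>\<^bsub>M\<^esub> \<zero> \<odot>\<^bsub>M\<^esub> y"
      using N'c y by auto
    then show "a \<in> ?N''"
      using a R.zero_closed by blast
  qed
  moreover have "N \<inter> ?N'' \<subseteq> {\<zero>\<^bsub>M\<^esub>}"
  proof
    fix n assume "n \<in> N \<inter> ?N''"
    then obtain a r where n: "n \<in> N" and a: "a \<in> N'" and r: "r \<in> carrier R"
      and n_eq: "n = a \<oplus>\<^bsub>M\<^esub> r \<odot>\<^bsub>M\<^esub> y"
      by blast
    have ac: "a \<in> carrier M"
      using a N'c by auto
    have "r \<odot>\<^bsub>M\<^esub> y = n \<oplus>\<^bsub>M\<^esub> \<ominus>\<^bsub>M\<^esub> a"
      using ac r y by (simp add: n_eq M.a_ac M.r_neg2)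
    moreover have "\<ominus>\<^bsub>M\<^esub> a \<in> N'"
      using a N' unfolding lsubmodule_def by blast
    ultimately have "r \<odot>\<^bsub>M\<^esub> y = \<zero>\<^bsub>M\<^esub>"
      using trivial r n by blast
    then have "n \<in> N \<inter> N'"
      using n a ac n_eq by simp
    then show "n \<in> {\<zero>\<^bsub>M\<^esub>}"
      using disjoint by blast
  qed
  moreover have "\<zero>\<^bsub>M\<^esub> \<in> N \<inter> ?N''"
    using N N'' unfolding lsubmodule_def by blast
  ultimately have "?N'' = N'"
    using maximal[OF N''] by blast
  moreover have "y = \<zero>\<^bsub>M\<^esub> \<oplus>\<^bsub>M\<^esub> \<one> \<odot>\<^bsub>M\<^esub> y" "\<zero>\<^bsub>M\<^esub> \<in> N'"
    using y N' unfolding lsubmodule_def by auto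
  ultimately show ?thesis
    using R.one_closed by blast
qed

lemma sum_eq_carrier_if_maximal_disjoint:
  assumes sl: "semilocal R"
    and annihilates: "\<And>j x. j \<in> jacobson_radical R \<Longrightarrow> x \<in> carrier M \<Longrightarrow> j \<odot>\<^bsub>M\<^esub> x = \<zero>\<^bsub>M\<^esub>"
    and N: "lsubmodule R N M" and N': "lsubmodule R N' M" and disjoint: "N \<inter> N' = {\<zero>\<^bsub>M\<^esub>}"
    and maximal: "\<And>N''. lsubmodule R N'' M \<Longrightarrow> N' \<subseteq> N'' \<Longrightarrow> N \<inter> N'' = {\<zero>\<^bsub>M\<^esub>} \<Longrightarrow> N'' = N'"
  shows "{a \<oplus>\<^bsub>M\<^esub> b | a b. a \<in> N \<and> b \<in> N'} = carrier M" (is "?P = _")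
proof
  have P: "lsubmodule R ?P M"
    using lsubmodule_sum[OF N N'] .
  then show "?P \<subseteq> carrier M"
    unfolding lsubmodule_def by blast
  show "carrier M \<subseteq> ?P"
  proof
    fix x assume x: "x \<in> carrier M"
    let ?L = "{r \<in> carrier R. r \<odot>\<^bsub>M\<^esub> x \<in> ?P}"
    obtain l e where l: "l \<in> ?L" and e: "e \<in> carrier R"
      and unit: "\<one> \<ominus> (l \<oplus> e) \<in> jacobson_radical R"
      and complement: "\<And>r. r \<in> carrier R \<Longrightarrow> r \<otimes> e \<in> ?L \<Longrightarrow> r \<otimes> e \<in> jacobson_radical R"
      using R.semilocal_left_ideal_complement[OF sl left_ideal_colon[OF P x]] by blast
    have lc: "l \<in> carrier R"
      using l by blast
    have "x = (\<one> \<ominus> (l \<oplus> e) \<oplus> (l \<oplus> e)) \<odot>\<^bsub>M\<^esub> x"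
      using x lc e by (simp add: R.minus_eq R.l_neg R.a_assoc)
    also have "\<dots> = l \<odot>\<^bsub>M\<^esub> x \<oplus>\<^bsub>M\<^esub> e \<odot>\<^bsub>M\<^esub> x"
      using x lc e annihilates[OF unit x] by (simp add: smult_l_distr)
    finally have x_eq: "x = l \<odot>\<^bsub>M\<^esub> x \<oplus>\<^bsub>M\<^esub> e \<odot>\<^bsub>M\<^esub> x" .
    have "e \<odot>\<^bsub>M\<^esub> x \<in> N'"
    proof (rule mem_maximal_disjoint_lsubmodule[OF N N' disjoint maximal])
      show "r \<odot>\<^bsub>M\<^esub> (e \<odot>\<^bsub>M\<^esub> x) = \<zero>\<^bsub>M\<^esub>"
        if r: "r \<in> carrier R" and "r \<odot>\<^bsub>M\<^esub> (e \<odot>\<^bsub>M\<^esub> x) \<in> ?P" for r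
      proof -
        have "r \<otimes> e \<in> jacobson_radical R"
          using that e x by (intro complement) (simp_all add: smult_assoc1)
        then show ?thesis
          using annihilates r e x by (simp flip: smult_assoc1)
      qed
    qed (use e x in simp_all)
    moreover have "e \<odot>\<^bsub>M\<^esub> x = \<zero>\<^bsub>M\<^esub> \<oplus>\<^bsub>M\<^esub> e \<odot>\<^bsub>M\<^esub> x" "\<zero>\<^bsub>M\<^esub> \<in> N"
      using N e x unfolding lsubmodule_def by auto
    ultimately have "e \<odot>\<^bsub>M\<^esub> x \<in> ?P"
      by blast
    moreover have "l \<odot>\<^bsub>M\<^esub> x \<in> ?P"
      using l by blast
    ultimately show "x \<in> ?P"
      using P x_eq unfolding lsubmodule_def by (metis (no_types, lifting))
  qed
qed

lemma semisimple_if_semilocal: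
  assumes "semilocal R"
    and "\<And>j x. j \<in> jacobson_radical R \<Longrightarrow> x \<in> carrier M \<Longrightarrow> j \<odot>\<^bsub>M\<^esub> x = \<zero>\<^bsub>M\<^esub>"
  shows "semisimple_module R M"
  unfolding semisimple_module_def
proof (intro allI impI)
  fix N assume N: "lsubmodule R N M"
  have "{\<zero>\<^bsub>M\<^esub>} \<inter> (N - {\<zero>\<^bsub>M\<^esub>}) = {}"
    by blast
  then obtain N' where N': "lsubmodule R N' M" "{\<zero>\<^bsub>M\<^esub>} \<subseteq> N'" "N' \<inter> (N - {\<zero>\<^bsub>M\<^esub>}) = {}"
    and maximal: "\<And>N''. lsubmodule R N'' M \<Longrightarrow> N' \<subseteq> N'' \<Longrightarrow> N'' \<inter> (N - {\<zero>\<^bsub>M\<^esub>}) = {} \<Longrightarrow> N'' = N'"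
    by (rule exists_maximal_lsubmodule_avoiding[OF lsubmodule_zero]) blast
  have zero_mem: "\<And>X. lsubmodule R X M \<Longrightarrow> \<zero>\<^bsub>M\<^esub> \<in> X"
    unfolding lsubmodule_def by blast
  have disjoint: "N \<inter> N' = {\<zero>\<^bsub>M\<^esub>}"
    using N' N zero_mem by blast
  have "N'' = N'" if "lsubmodule R N'' M" "N' \<subseteq> N''" "N \<inter> N'' = {\<zero>\<^bsub>M\<^esub>}" for N''
    using maximal that by blast
  then show "\<exists>N'. lsubmodule R N' M \<and> N \<inter> N' = {\<zero>\<^bsub>M\<^esub>} \<and>
      {a \<oplus>\<^bsub>M\<^esub> b | a b. a \<in> N \<and> b \<in> N'} = carrier M"
    using N'(1) disjoint sum_eq_carrier_if_maximal_disjoint[OF assms N N'(1) disjoint] by blast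
qed

end

theorem proposition2p1:
  fixes R :: "('a, 'c) ring_scheme" and M :: "('a, 'b, 'd) module_scheme"
  assumes "ring R" and "left_module R M" and "rd_regular R M"
  shows "(\<forall>j\<in>jacobson_radical R. \<forall>x\<in>carrier M. j \<odot>\<^bsub>M\<^esub> x = \<zero>\<^bsub>M\<^esub>)
         \<and> (semilocal R \<longrightarrow> semisimple_module R M)"
proof -
  interpret lmodule R M
    by (rule lmodule.intro) (rule assms(2))
  show ?thesis
    using jacobson_radical_annihilates[OF assms(3)] semisimple_if_semilocal by blast
qed

end
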